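(* Let $h>0$ and let $B\subset\mathbb Z^8_h$ be bounded. As operators on the space of functions $\partial B\to\mathbb O$, $$(P^h_{\partial B})^2=P^h_{\partial B},\qquad (Q^h_{\partial B})^2=Q^h_{\partial B},\qquad P^h_{\partial B}Q^h_{\partial B}=Q^h_{\partial B}P^h_{\partial B}=0.$$
   Context: $\mathbb O$ is the real octonion algebra with basis $\mathbf e_0=1,\mathbf e_1,\dots,\mathbf e_7$, where $\mathbf e_i\mathbf e_j=-\delta_{ij}+\sum_k\varepsilon_{ijk}\mathbf e_k$ for $1\le i,j\le 7$, $\varepsilon_{ijk}$ totally antisymmetric with $\varepsilon_{ijk}=1$ for $ijk\in\{123,145,176,246,257,347,365\}$; $\overline{\mathbf e}_0=\mathbf e_0$, $\overline{\mathbf e}_l=-\mathbf e_l$ ($l\ge1$). For $h>0$, $\mathbb Z^8_h=(h\mathbb Z)^8$, $e_0,\dots,e_7$ are the standard unit vectors of $\mathbb R^8$, $\chi_A$ is the indicator of $A$. $\partial_l^{+,h}f(x)=(f(x+he_l)-f(x))/h$, $\partial_l^{-,h}f(x)=(f(x)-f(x-he_l))/h$. $N(x)=\{x,x\pm he_0,\dots,x\pm he_7\}$; $\partial B=\{x:\ N(x)\cap B\neq\emptyset,\ N(x)\cap(\mathbb Z^8_h\setminus B)\neq\emptyset\}$. For $x\in\partial B$: $\Sigma(x)=\sum_l[(\partial_l^{+,h}\chi_B(x))^2+(\partial_l^{-,h}\chi_B(x))^2]$, $s(x)=\frac{h^8}{2}\sqrt{\Sigma(x)}$, $n_l^\pm(x)=-2\partial_l^{\pm,h}\chi_B(x)/\sqrt{\Sigma(x)}$,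 $\int_{\partial B}g\,dS=\sum_{x\in\partial B}g(x)s(x)$. Fundamental solution: $E^1(x)=\frac{1}{(2\pi)^8}\int_{[-\pi,\pi]^8}\frac{\sum_l\overline{\mathbf e}_l\sin u_l}{\sum_l\sin^2u_l}\sin(\sum_lu_lx_l)\,du$ ($x\in\mathbb Z^8$), $E^h(x)=h^{-7}E^1(x/h)$. Star product: $K^h(x,y)*g(x)=-\frac12\sum_{l=0}^7\big(E^h(he_l-x+y)n_l^-(x)+E^h(-he_l-x+y)n_l^+(x)\big)(\mathbf e_lg(x))$. For $g:\partial B\to\mathbb O$: $S^h_{\partial B}g(y)=2\int_{\partial B}K^h(x,y)*\big(g(x)-g(y)\big)dS(x)+g(y)$ ($y\in\partial B$), $P^h_{\partial B}g=\frac12(g+S^h_{\partial B}g)$, $Q^h_{\partial B}g=\frac12(g-S^h_{\partial B}g)$. *)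

theory Defs
  imports "HOL-Analysis.Analysis"
begin

text \<open>Octonions and points of R^8 are both modelled as vectors in real^8;
  the component with index (of_nat l :: 8) is the coefficient of e_l, l = 0..7.\<close>

type_synonym octo = "real ^ 8"

definition ev :: "nat \<Rightarrow> real ^ 8" where
  "ev l = axis (of_nat l :: 8) 1"

definition oct_triples :: "(nat \<times> nat \<times> nat) list" where
  "oct_triples = [(1,2,3),(1,4,5),(1,7,6),(2,4,6),(2,5,7),(3,4,7),(3,6,5)]"

definition oeps :: "nat \<Rightarrow> nat \<Rightarrow> nat \<Rightarrow> real" where
  "oeps i j k =
     (if \<exists>(a,b,c)\<in>set oct_triples. (i,j,k) \<in> {(a,b,c),(b,c,a),(c,a,b)} then 1
      else if \<exists>(a,b,c)\<in>set oct_triples. (i,j,k) \<in> {(b,a,c),(a,c,b),(c,b,a)} then -1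
      else 0)"

definition ebprod :: "nat \<Rightarrow> nat \<Rightarrow> octo" where
  "ebprod i j =
     (if i = 0 then ev j
      else if j = 0 then ev i
      else (- (if i = j then 1 else 0)) *\<^sub>R ev 0 + (\<Sum>k\<in>{1..7}. oeps i j k *\<^sub>R ev k))"

definition omult :: "octo \<Rightarrow> octo \<Rightarrow> octo" where
  "omult x y = (\<Sum>i<8. \<Sum>j<8. (x $ of_nat i * y $ of_nat j) *\<^sub>R ebprod i j)"

definition oconj :: "octo \<Rightarrow> octo" where
  "oconj x = (\<Sum>l<8. ((if l = 0 then 1 else -1) * x $ of_nat l) *\<^sub>R ev l)"

definition lattice :: "real \<Rightarrow> (real ^ 8) set" where
  "lattice h = {x. \<forall>i. \<exists>k::int. x $ i = h * of_int k}"

definition chi :: "(real ^ 8) set \<Rightarrow> real ^ 8 \<Rightarrow> real" where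
  "chi B x = indicator B x"

definition dplus :: "real \<Rightarrow> nat \<Rightarrow> (real ^ 8 \<Rightarrow> real) \<Rightarrow> real ^ 8 \<Rightarrow> real" where
  "dplus h l f x = (f (x + h *\<^sub>R ev l) - f x) / h"

definition dminus :: "real \<Rightarrow> nat \<Rightarrow> (real ^ 8 \<Rightarrow> real) \<Rightarrow> real ^ 8 \<Rightarrow> real" where
  "dminus h l f x = (f x - f (x - h *\<^sub>R ev l)) / h"

definition nbhd :: "real \<Rightarrow> real ^ 8 \<Rightarrow> (real ^ 8) set" where
  "nbhd h x = insert x ((\<Union>l<8. {x + h *\<^sub>R ev l, x - h *\<^sub>R ev l}))"

definition dbound :: "real \<Rightarrow> (real ^ 8) set \<Rightarrow> (real ^ 8) set" where
  "dbound h B = {x \<in> lattice h. nbhd h x \<inter> B \<noteq> {} \<and> nbhd h x \<inter> (lattice h - B) \<noteq> {}}"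

definition Sig :: "real \<Rightarrow> (real ^ 8) set \<Rightarrow> real ^ 8 \<Rightarrow> real" where
  "Sig h B x = (\<Sum>l<8. (dplus h l (chi B) x)\<^sup>2 + (dminus h l (chi B) x)\<^sup>2)"

definition sarea :: "real \<Rightarrow> (real ^ 8) set \<Rightarrow> real ^ 8 \<Rightarrow> real" where
  "sarea h B x = h ^ 8 / 2 * sqrt (Sig h B x)"

definition nplus :: "real \<Rightarrow> (real ^ 8) set \<Rightarrow> nat \<Rightarrow> real ^ 8 \<Rightarrow> real" where
  "nplus h B l x = - 2 * dplus h l (chi B) x / sqrt (Sig h B x)"

definition nminus :: "real \<Rightarrow> (real ^ 8) set \<Rightarrow> nat \<Rightarrow> real ^ 8 \<Rightarrow> real" where
  "nminus h B l x = - 2 * dminus h l (chi B) x / sqrt (Sig h B x)"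

definition bint :: "real \<Rightarrow> (real ^ 8) set \<Rightarrow> (real ^ 8 \<Rightarrow> octo) \<Rightarrow> octo" where
  "bint h B g = (\<Sum>x\<in>dbound h B. sarea h B x *\<^sub>R g x)"

definition E1 :: "real ^ 8 \<Rightarrow> octo" where
  "E1 x = (1 / (2 * pi) ^ 8) *\<^sub>R
     integral (cbox (- (\<chi> i. pi)) (\<chi> i. pi))
       (\<lambda>u::real^8. (sin (\<Sum>l<8. u $ of_nat l * x $ of_nat l)
            / (\<Sum>l<8. (sin (u $ of_nat l))\<^sup>2)) *\<^sub>R
          (\<Sum>l<8. sin (u $ of_nat l) *\<^sub>R oconj (ev l)))"

definition Eh :: "real \<Rightarrow> real ^ 8 \<Rightarrow> octo" where
  "Eh h x = (1 / h ^ 7) *\<^sub>R E1 ((1 / h) *\<^sub>R x)"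

definition kstar :: "real \<Rightarrow> (real ^ 8) set \<Rightarrow> real ^ 8 \<Rightarrow> real ^ 8 \<Rightarrow> octo \<Rightarrow> octo" where
  "kstar h B x y v = (- 1 / 2) *\<^sub>R
     (\<Sum>l<8. omult (nminus h B l x *\<^sub>R Eh h (h *\<^sub>R ev l - x + y)
                    + nplus h B l x *\<^sub>R Eh h (- (h *\<^sub>R ev l) - x + y))
                   (omult (ev l) v))"

definition Sop :: "real \<Rightarrow> (real ^ 8) set \<Rightarrow> (real ^ 8 \<Rightarrow> octo) \<Rightarrow> real ^ 8 \<Rightarrow> octo" where
  "Sop h B g y = 2 *\<^sub>R bint h B (\<lambda>x. kstar h B x y (g x - g y)) + g y"

definition Pop :: "real \<Rightarrow> (real ^ 8) set \<Rightarrow> (real ^ 8 \<Rightarrow> octo) \<Rightarrow> real ^ 8 \<Rightarrow> octo" where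
  "Pop h B g y = (1 / 2) *\<^sub>R (g y + Sop h B g y)"

definition Qop :: "real \<Rightarrow> (real ^ 8) set \<Rightarrow> (real ^ 8 \<Rightarrow> octo) \<Rightarrow> real ^ 8 \<Rightarrow> octo" where
  "Qop h B g y = (1 / 2) *\<^sub>R (g y - Sop h B g y)"

end

theory Submission
  imports Defs
begin

text \<open>Write the boundary operator as S g = A g + (1 - 2 chi_B) g, where A is a boundary sum of the
  Cauchy kernel. Discrete summation by parts against the jumps of chi_B gives a Cauchy-Pompeiu formula
  A F = 2 chi_B F - h^7 sum_(b in B) E^h(. - b) D F(b) with D the central-difference Dirac operator;
  it rests on E^h being a two-sided fundamental solution of D, which follows from the Fourier
  representation of E^1 and the relations conj(e_k)(e_l x) + conj(e_l)(e_k x) = 2 delta_kl x.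
  Inside B, D of A G equals -2 D((1 - chi_B) G), so A (A G) = 2 chi_B A G - 2 A ((1 - chi_B) G), hence
  A (S g) = (2 chi_B - 1) A g and S (S g) = g on the lattice. P = (I + S)/2 and Q = (I - S)/2 are
  then complementary projections.\<close>

section \<open>Octonion multiplication on basis elements\<close>


lemma of_nat_8_inj: "inj_on (of_nat :: nat \<Rightarrow> 8) {..<8}"
proof (rule inj_onI)
  have *: "a = b" if "a \<le> b" "b < 8" "(of_nat a :: 8) = of_nat b" for a b :: nat
  proof -
    have "(of_nat (b - a) :: 8) = 0" using that by (simp add: of_nat_diff)
    then have "8 dvd (b - a)" by (simp add: of_nat_eq_0_iff_char_dvd)
    with that show ?thesis by (auto dest: dvd_imp_le)
  qed
  fix a b assume "a \<in> {..<8}" "b \<in> {..<8}" "(of_nat a :: 8) = of_nat b"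
  then show "a = b" using *[of a b] *[of b a] by (cases "a \<le> b") auto
qed

lemma UNIV_8_eq: "(UNIV :: 8 set) = of_nat ` {..<8}"
proof -
  have "card (of_nat ` {..<8} :: 8 set) = 8" using of_nat_8_inj by (simp add: card_image)
  then show ?thesis using card_subset_eq[of UNIV "of_nat ` {..<8} :: 8 set"] by simp
qed

lemma sum_UNIV_8: "(\<Sum>i\<in>UNIV. f i) = (\<Sum>l<8. f (of_nat l :: 8))"
  by (subst UNIV_8_eq) (simp add: sum.reindex[OF of_nat_8_inj])

lemma ev_nth: "a < 8 \<Longrightarrow> l < 8 \<Longrightarrow> ev l $ of_nat a = (if a = l then 1 else 0)"
  using of_nat_8_inj by (auto simp: ev_def axis_def dest: inj_onD)

lemma octo_linear_eqI:
  assumes "linear f" "linear g" "\<And>m. m < 8 \<Longrightarrow> f (ev m) = g (ev m)"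
  shows "f = g"
proof (rule linear_eq_stdbasis[OF assms(1,2)])
  fix b :: octo assume "b \<in> Basis"
  then obtain i where i: "b = axis i 1" by (auto simp: Basis_vec_def)
  obtain m where "m < 8" "i = of_nat m" using UNIV_8_eq by (metis UNIV_I imageE lessThan_iff)
  then show "f b = g b" using assms(3) i by (simp add: ev_def)
qed

interpretation omult: bounded_bilinear omult
  unfolding bilinear_conv_bounded_bilinear[symmetric] bilinear_def
  by (auto intro!: linearI simp: omult_def algebra_simps scaleR_sum_right sum.distrib)

text \<open>The triples of the multiplication table satisfy k = i XOR j, so e_i e_j = osign i j e_(i XOR j).\<close>

definition osign :: "nat \<Rightarrow> nat \<Rightarrow> real" where
  "osign i j = (if i = 0 \<or> j = 0 then 1 else if i = j then -1 else oeps i j (xor i j))"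

lemma less_8_cases: "(i::nat) < 8 \<Longrightarrow> i = 0 \<or> i = 1 \<or> i = 2 \<or> i = 3 \<or> i = 4 \<or> i = 5 \<or> i = 6 \<or> i = 7"
  by linarith

lemma oeps_eq: "oeps i j k =
  (if (i,j,k) \<in> {(1,2,3),(2,3,1),(3,1,2),(1,4,5),(4,5,1),(5,1,4),(1,7,6),(7,6,1),(6,1,7),(2,4,6),(4,6,2),(6,2,4),
     (2,5,7),(5,7,2),(7,2,5),(3,4,7),(4,7,3),(7,3,4),(3,6,5),(6,5,3),(5,3,6)} then 1
   else if (i,j,k) \<in> {(2,1,3),(1,3,2),(3,2,1),(4,1,5),(1,5,4),(5,4,1),(7,1,6),(1,6,7),(6,7,1),(4,2,6),(2,6,4),(6,4,2),
     (5,2,7),(2,7,5),(7,5,2),(4,3,7),(3,7,4),(7,4,3),(6,3,5),(3,5,6),(5,6,3)} then -1 else 0)"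
  unfolding oeps_def oct_triples_def by auto

lemma ebprod_eq_osign: "i < 8 \<Longrightarrow> j < 8 \<Longrightarrow> ebprod i j = osign i j *\<^sub>R ev (xor i j)"
  by (drule less_8_cases)+
     (elim disjE; simp add: ebprod_def osign_def oeps_eq if_distrib[of "\<lambda>x. x *\<^sub>R _"] cong: if_cong;
      simp only: numeral_3_eq_3)

text \<open>On basis elements the polarised identities conj(a)(a x) = |a|^2 x and a (conj(a) x) = |a|^2 x
  reduce to these sign identities, checked by evaluation.\<close>

lemma osign_identities:
  "\<forall>k\<in>set [0..<8]. \<forall>l\<in>set [0..<8]. \<forall>m\<in>set [0..<8].
     (if k = 0 then 1 else -1) * osign l m * osign k (xor l m) + (if l = 0 then 1 else -1) * osign k m * osign l (xor k m)
       = (if k = l then 2 else 0)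
   \<and> (if l = 0 then 1 else -1) * osign l m * osign k (xor l m) + (if k = 0 then 1 else -1) * osign k m * osign l (xor k m)
       = (if k = l then 2 else 0)"
  unfolding osign_def oeps_def oct_triples_def by code_simp

lemma xor_less_8: "i < 8 \<Longrightarrow> j < 8 \<Longrightarrow> xor i j < (8::nat)"
  by (drule less_8_cases)+ (elim disjE; simp)

lemma omult_ev_ev: "i < 8 \<Longrightarrow> j < 8 \<Longrightarrow> omult (ev i) (ev j) = osign i j *\<^sub>R ev (xor i j)"
  by (simp add: omult_def ev_nth ebprod_eq_osign if_distrib[of "\<lambda>x. x * _"] if_distrib[of "\<lambda>x. _ * x"]
                if_distrib[of "\<lambda>x. x *\<^sub>R _"] cong: if_cong)

lemma oconj_ev: "k < 8 \<Longrightarrow> oconj (ev k) = (if k = 0 then 1 else -1) *\<^sub>R ev k"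
  by (simp add: oconj_def ev_nth if_distrib[of "\<lambda>x. _ * x"] if_distrib[of "\<lambda>x. x *\<^sub>R _"] cong: if_cong)

lemma oconj_ev_anticommute_on_ev:
  assumes "k < 8" "l < 8" "m < 8"
  shows "omult (oconj (ev k)) (omult (ev l) (ev m)) + omult (oconj (ev l)) (omult (ev k) (ev m))
           = (if k = l then 2 else 0) *\<^sub>R ev m"
    and "omult (ev k) (omult (oconj (ev l)) (ev m)) + omult (ev l) (omult (oconj (ev k)) (ev m))
           = (if k = l then 2 else 0) *\<^sub>R ev m"
proof -
  define c where "c i = (if i = 0 then 1 else -1 :: real)" for i :: nat
  define a where "a = osign l m * osign k (xor l m)"
  define b where "b = osign k m * osign l (xor k m)"
  have signs: "c k * a + c l * b = (if k = l then 2 else 0)" "c l * a + c k * b = (if k = l then 2 else 0)"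
    using osign_identities assms by (auto simp: a_def b_def c_def mult.assoc)
  have idx: "xor l (xor k m) = xor k (xor l m)" "k = l \<Longrightarrow> xor k (xor l m) = m"
    by (rule xor.left_commute) (simp flip: xor.assoc)
  have "omult (oconj (ev k)) (omult (ev l) (ev m)) + omult (oconj (ev l)) (omult (ev k) (ev m))
      = (c k * a + c l * b) *\<^sub>R ev (xor k (xor l m))"
   and "omult (ev k) (omult (oconj (ev l)) (ev m)) + omult (ev l) (omult (oconj (ev k)) (ev m))
      = (c l * a + c k * b) *\<^sub>R ev (xor k (xor l m))"
    using assms idx(1) by (simp_all add: omult_ev_ev oconj_ev xor_less_8 omult.scaleR_left omult.scaleR_right
                                          a_def b_def c_def scaleR_add_left)
  then show "omult (oconj (ev k)) (omult (ev l) (ev m)) + omult (oconj (ev l)) (omult (ev k) (ev m))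
           = (if k = l then 2 else 0) *\<^sub>R ev m"
    and "omult (ev k) (omult (oconj (ev l)) (ev m)) + omult (ev l) (omult (oconj (ev k)) (ev m))
           = (if k = l then 2 else 0) *\<^sub>R ev m"
    using signs idx(2) by auto
qed

lemma linear_omult_omult_add: "linear (\<lambda>x. omult a (omult b x) + omult c (omult d x))"
  by (intro bounded_linear.linear bounded_linear_add bounded_linear_compose[OF omult.bounded_linear_right]
      omult.bounded_linear_right)

lemma oconj_ev_anticommute:
  assumes "k < 8" "l < 8"
  shows "omult (oconj (ev k)) (omult (ev l) x) + omult (oconj (ev l)) (omult (ev k) x) = (if k = l then 2 else 0) *\<^sub>R x"
    and "omult (ev k) (omult (oconj (ev l)) x) + omult (ev l) (omult (oconj (ev k)) x) = (if k = l then 2 else 0) *\<^sub>R x"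
proof -
  note eqI = octo_linear_eqI[OF linear_omult_omult_add linear_scale_self]
  note on_ev = oconj_ev_anticommute_on_ev[OF assms]
  have "(\<lambda>x. omult (oconj (ev k)) (omult (ev l) x) + omult (oconj (ev l)) (omult (ev k) x))
      = (\<lambda>x. (if k = l then 2 else 0) *\<^sub>R x)"
    by (rule eqI) (simp add: on_ev(1))
  moreover have "(\<lambda>x. omult (ev k) (omult (oconj (ev l)) x) + omult (ev l) (omult (oconj (ev k)) x))
      = (\<lambda>x. (if k = l then 2 else 0) *\<^sub>R x)"
    by (rule eqI) (simp add: on_ev(2))
  ultimately show "omult (oconj (ev k)) (omult (ev l) x) + omult (oconj (ev l)) (omult (ev k) x) = (if k = l then 2 else 0) *\<^sub>R x"
    and "omult (ev k) (omult (oconj (ev l)) x) + omult (ev l) (omult (oconj (ev k)) x) = (if k = l then 2 else 0) *\<^sub>R x"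
    by (auto dest: fun_cong)
qed

section \<open>Fourier analysis of the fundamental solution\<close>

lemma integral_lborel_prod:
  fixes f :: "'a::euclidean_space \<Rightarrow> real \<Rightarrow> complex"
  assumes [measurable]: "\<And>b. b \<in> Basis \<Longrightarrow> f b \<in> borel_measurable borel"
  assumes int: "\<And>b. b \<in> Basis \<Longrightarrow> integrable lborel (f b)"
  shows "(\<integral>x. (\<Prod>b\<in>Basis. f b (x \<bullet> b)) \<partial>lborel) = (\<Prod>b\<in>Basis. (\<integral>x. f b x \<partial>lborel))"
proof -
  have m: "(\<lambda>x. \<Sum>b\<in>Basis. x b *\<^sub>R b) \<in> measurable (\<Pi>\<^sub>M b\<in>Basis. (lborel::real measure)) (borel :: 'a measure)"
    by measurable
  have "(\<integral>x. (\<Prod>b\<in>Basis. f b (x \<bullet> b)) \<partial>lborel)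
     = (\<integral>x. (\<Prod>b\<in>Basis. f b ((\<Sum>b'\<in>Basis. x b' *\<^sub>R b') \<bullet> b)) \<partial>(\<Pi>\<^sub>M b\<in>Basis. lborel))"
    unfolding lborel_eq[where 'a='a] by (rule integral_distr[OF m]) measurable
  also have "\<dots> = (\<integral>x. (\<Prod>b\<in>Basis. f b (x b)) \<partial>(\<Pi>\<^sub>M b\<in>Basis. lborel))"
    by (intro Bochner_Integration.integral_cong prod.cong refl)
       (simp add: inner_sum_left inner_Basis if_distrib[of "\<lambda>t. _ * t"] cong: if_cong)
  also have "\<dots> = (\<Prod>b\<in>Basis. (\<integral>x. f b x \<partial>lborel))"
    by (rule product_sigma_finite.product_integral_prod)
       (auto intro: int lborel.sigma_finite_measure_axioms simp: product_sigma_finite_def)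
  finally show ?thesis .
qed

lemma prod_Basis_vec: "(\<Prod>b\<in>(Basis :: (real^'n) set). f b) = (\<Prod>i\<in>UNIV. f (axis i 1))"
proof -
  have B: "(Basis :: (real^'n) set) = range (\<lambda>i. axis i 1)" by (auto simp: Basis_vec_def)
  show ?thesis unfolding B by (simp add: prod.reindex inj_on_def axis_eq_axis)
qed

lemma lborel_integral_exp_int_freq:
  assumes n: "n \<in> \<int>"
  shows "(\<integral>t. indicator {-pi..pi} t *\<^sub>R exp (\<i> * complex_of_real (n * t)) \<partial>lborel)
       = (if n = 0 then 2 * pi else 0)"
proof -
  define f where "f t = exp (\<i> * complex_of_real (n * t))" for t
  have "integrable lborel (\<lambda>t. indicator {-pi..pi} t *\<^sub>R f t)"
    by (rule borel_integrable_compact) (auto simp: f_def intro!: continuous_intros)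
  then have "(\<integral>t. indicator {-pi..pi} t *\<^sub>R f t \<partial>lborel) = integral {-pi..pi} f"
    using set_borel_integral_eq_integral(2)[of "{-pi..pi}" f]
    by (simp add: set_integrable_def set_lebesgue_integral_def)
  also have "\<dots> = (if n = 0 then 2 * pi else 0)"
  proof (cases "n = 0")
    case True
    then have "f = (\<lambda>t. 1)" by (auto simp: f_def)
    then show ?thesis using True by (simp add: scaleR_conv_of_real)
  next
    case False
    define F where "F = (\<lambda>t. exp (\<i> * complex_of_real (n * t)) / (\<i> * complex_of_real n))"
    have "(F has_vector_derivative f t) (at t within {-pi..pi})" for t
    proof -
      have "((\<lambda>z. exp (\<i> * complex_of_real n * z) / (\<i> * complex_of_real n)) has_field_derivative
              exp (\<i> * complex_of_real n * complex_of_real t)) (at (complex_of_real t))"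
        using False by (auto intro!: derivative_eq_intros)
      from has_vector_derivative_real_field[OF this] show ?thesis
        by (simp add: F_def f_def mult.assoc)
    qed
    then have "(f has_integral (F pi - F (- pi))) {-pi..pi}"
      by (intro fundamental_theorem_of_calculus) auto
    moreover have "F pi = F (- pi)"
    proof -
      have "sin (n * pi) = 0" using n sin_times_pi_eq_0 by blast
      then have "exp (\<i> * complex_of_real (n * pi)) = exp (\<i> * complex_of_real (n * - pi))"
        by (simp add: complex_eq_iff Re_exp Im_exp)
      then show ?thesis by (simp add: F_def)
    qed
    ultimately show ?thesis using False by (simp add: integral_unique)
  qed
  finally show ?thesis by (simp add: f_def)
qed

abbreviation period_cube :: "(real^'n) set" where
  "period_cube \<equiv> cbox (- (\<chi> i. pi)) (\<chi> i. pi)"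

lemma integral_period_cube_exp:
  fixes w :: "real^'n"
  assumes w: "\<forall>i. w $ i \<in> \<int>"
  shows "integral period_cube (\<lambda>u. exp (\<i> * complex_of_real (u \<bullet> w)))
       = (if w = 0 then complex_of_real ((2 * pi) ^ CARD('n)) else 0)"
proof -
  define F where "F u = exp (\<i> * complex_of_real (u \<bullet> w))" for u :: "real^'n"
  define g where "g b t = indicator {-pi..pi} t *\<^sub>R exp (\<i> * complex_of_real ((w \<bullet> b) * t))"
    for b :: "real^'n" and t :: real
  have "integrable lborel (\<lambda>u. indicator period_cube u *\<^sub>R F u)"
    by (rule borel_integrable_compact) (auto simp: F_def intro!: continuous_intros)
  then have "integral period_cube F = (\<integral>u. indicator period_cube u *\<^sub>R F u \<partial>lborel)"
    using set_borel_integral_eq_integral(2)[of period_cube F]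
    by (simp add: set_integrable_def set_lebesgue_integral_def)
  also have "\<dots> = (\<integral>u. (\<Prod>b\<in>Basis. g b (u \<bullet> b)) \<partial>lborel)"
  proof (rule Bochner_Integration.integral_cong[OF refl])
    fix u :: "real^'n"
    have "(\<Prod>b\<in>Basis. g b (u \<bullet> b))
        = complex_of_real (\<Prod>i\<in>UNIV. indicator {-pi..pi} (u $ i)) * exp (\<Sum>i\<in>UNIV. \<i> * complex_of_real (w $ i * u $ i))"
      by (simp add: prod_Basis_vec inner_axis g_def scaleR_conv_of_real prod.distrib exp_sum)
    also have "(\<Prod>i\<in>UNIV. indicator {-pi..pi} (u $ i)) = (indicator period_cube u :: real)"
      by (auto simp: indicator_def prod_zero_iff mem_box_cart)
    also have "(\<Sum>i\<in>UNIV. \<i> * complex_of_real (w $ i * u $ i)) = \<i> * complex_of_real (u \<bullet> w)"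
      by (simp add: inner_vec_def sum_distrib_left mult.commute)
    finally show "indicator period_cube u *\<^sub>R F u = (\<Prod>b\<in>Basis. g b (u \<bullet> b))"
      by (simp add: F_def scaleR_conv_of_real)
  qed
  also have "\<dots> = (\<Prod>b\<in>Basis. (\<integral>t. g b t \<partial>lborel))"
    by (rule integral_lborel_prod) (auto simp: g_def intro!: borel_integrable_compact continuous_intros)
  also have "\<dots> = (\<Prod>i\<in>UNIV. complex_of_real (if w $ i = 0 then 2 * pi else 0))"
    using lborel_integral_exp_int_freq w by (simp add: prod_Basis_vec g_def inner_axis)
  also have "\<dots> = (if w = 0 then complex_of_real ((2 * pi) ^ CARD('n)) else 0)"
    by (auto simp: prod_zero_iff vec_eq_iff)
  finally show ?thesis unfolding F_def .
qed

lemma integral_period_cube_cos: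
  fixes w :: "real^'n"
  assumes "\<forall>i. w $ i \<in> \<int>"
  shows "integral period_cube (\<lambda>u. cos (u \<bullet> w)) = (if w = 0 then (2 * pi) ^ CARD('n) else 0)"
proof -
  have "(\<lambda>u. exp (\<i> * complex_of_real (u \<bullet> w))) integrable_on period_cube"
    by (rule integrable_continuous) (auto intro!: continuous_intros)
  from integral_linear[OF this bounded_linear_Re] show ?thesis
    using integral_period_cube_exp[OF assms] by (simp add: Re_exp o_def)
qed

lemma sin_ge_quarter:
  assumes "0 \<le> s" "s \<le> pi / 2"
  shows "s / 4 \<le> sin s"
proof (cases "s \<le> pi / 3")
  case True
  have "(\<lambda>t. sin t - t / 2) 0 \<le> (\<lambda>t. sin t - t / 2) s"
  proof (rule DERIV_nonneg_imp_nondecreasing[OF assms(1)])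
    fix t assume t: "0 \<le> t" "t \<le> s"
    have "cos (pi / 3) \<le> cos t" using t True by (intro cos_monotone_0_pi_le) auto
    then have "cos t - 1 / 2 \<ge> 0" by (simp add: cos_60)
    moreover have "DERIV (\<lambda>t. sin t - t / 2) t :> cos t - 1 / 2"
      by (auto intro!: derivative_eq_intros)
    ultimately show "\<exists>y. DERIV (\<lambda>t. sin t - t / 2) t :> y \<and> y \<ge> 0" by blast
  qed
  then show ?thesis using assms by simp
next
  case False
  have "sin (pi / 3) \<le> sin s" using False assms by (intro sin_monotone_2pi_le) auto
  then have "sqrt 3 / 2 \<le> sin s" by (simp add: sin_60)
  moreover have "1 \<le> sqrt 3" by simp
  moreover have "s / 4 \<le> 1 / 2" using assms pi_less_4 by simp
  ultimately show ?thesis by linarith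
qed

lemma abs_sin_ge_quarter: "\<bar>s\<bar> \<le> pi / 2 \<Longrightarrow> \<bar>s\<bar> / 4 \<le> \<bar>sin s\<bar>"
  using sin_ge_quarter[of s] sin_ge_quarter[of "- s"] by (cases "s \<ge> 0") auto

lemma abs_sin_powr_neg_half_le:
  assumes t: "t \<in> {-pi..pi}" and "sin t \<noteq> 0"
  shows "\<bar>sin t\<bar> powr (- 1 / 2) \<le> 2 * (\<bar>t\<bar> powr (- 1 / 2) + \<bar>t - pi\<bar> powr (- 1 / 2) + \<bar>t + pi\<bar> powr (- 1 / 2))"
proof -
  obtain d where d: "d \<in> {\<bar>t\<bar>, \<bar>t - pi\<bar>, \<bar>t + pi\<bar>}" "d / 4 \<le> \<bar>sin t\<bar>"
  proof -
    consider "\<bar>t\<bar> \<le> pi / 2" | "\<bar>t - pi\<bar> \<le> pi / 2" | "\<bar>t + pi\<bar> \<le> pi / 2" using t by fastforce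
    then show ?thesis
      using abs_sin_ge_quarter[of t] abs_sin_ge_quarter[of "t - pi"] abs_sin_ge_quarter[of "t + pi"] that
      by cases (auto simp: sin_diff sin_add)
  qed
  have "t \<noteq> 0" "t \<noteq> pi" "t \<noteq> - pi" using assms(2) by auto
  with d(1) have "d > 0" by auto
  have "\<bar>sin t\<bar> powr (- 1 / 2) \<le> (d / 4) powr (- 1 / 2)"
    using d(2) \<open>d > 0\<close> by (intro powr_mono2') auto
  also have "(d / 4) powr (- 1 / 2) = 2 * d powr (- 1 / 2)"
  proof -
    have "(4::real) powr (- 1 / 2) = 1 / 2"
      by (simp add: powr_minus_divide powr_half_sqrt[symmetric, of 4] flip: powr_minus)
    then show ?thesis by (simp only: powr_divide) simp
  qed
  also have "\<dots> \<le> 2 * (\<bar>t\<bar> powr (- 1 / 2) + \<bar>t - pi\<bar> powr (- 1 / 2) + \<bar>t + pi\<bar> powr (- 1 / 2))"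
    using d(1) by auto
  finally show ?thesis .
qed

lemma nn_integral_abs_powr_neg_half_finite:
  assumes "a \<ge> 0"
  shows "(\<integral>\<^sup>+ s. ennreal (indicator {-a..a} s * \<bar>s - c\<bar> powr (- 1 / 2)) \<partial>lborel) < \<infinity>"
proof -
  define f where "f s = ennreal (indicator {0..a + \<bar>c\<bar>} s * s powr (- 1 / 2))" for s :: real
  have fm[measurable]: "f \<in> borel_measurable borel" unfolding f_def by measurable
  have "((\<lambda>x. x powr (- 1 / 2)) has_integral ((a + \<bar>c\<bar>) powr (- 1 / 2 + 1) / (- 1 / 2 + 1))) {0..a + \<bar>c\<bar>}"
    by (rule has_integral_powr_from_0) (use assms in auto)
  from nn_integral_has_integral_lebesgue[OF _ this] have f: "(\<integral>\<^sup>+ s. f s \<partial>lborel) < \<infinity>"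
    by (simp add: f_def)
  have "(\<integral>\<^sup>+ s. ennreal (indicator {-a..a} s * \<bar>s - c\<bar> powr (- 1 / 2)) \<partial>lborel)
      \<le> (\<integral>\<^sup>+ s. f (- c + 1 * s) + f (c + (-1) * s) \<partial>lborel)"
    by (intro nn_integral_mono) (auto simp: f_def indicator_def)
  also have "\<dots> = (\<integral>\<^sup>+ s. f (- c + 1 * s) \<partial>lborel) + (\<integral>\<^sup>+ s. f (c + (-1) * s) \<partial>lborel)"
    by (rule nn_integral_add) auto
  also have "\<dots> = (\<integral>\<^sup>+ s. f s \<partial>lborel) + (\<integral>\<^sup>+ s. f s \<partial>lborel)"
    using nn_integral_real_affine[OF fm, of 1 "- c"] nn_integral_real_affine[OF fm, of "-1" c] by simp
  also have "\<dots> < \<infinity>" using f by simp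
  finally show ?thesis .
qed

lemma nn_integral_abs_sin_powr_neg_half_finite:
  "(\<integral>\<^sup>+ t. ennreal (indicator {-pi..pi} t * \<bar>sin t\<bar> powr (- 1 / 2)) \<partial>lborel) < \<infinity>"
proof -
  define g where "g c t = ennreal (indicator {-pi..pi} t * \<bar>t - c\<bar> powr (- 1 / 2))" for c t :: real
  have [measurable]: "g c \<in> borel_measurable borel" for c unfolding g_def by measurable
  have "(\<integral>\<^sup>+ t. ennreal (indicator {-pi..pi} t * \<bar>sin t\<bar> powr (- 1 / 2)) \<partial>lborel)
      \<le> (\<integral>\<^sup>+ t. 2 * (g 0 t + g pi t + g (- pi) t) \<partial>lborel)"
  proof (intro nn_integral_mono)
    fix t
    show "ennreal (indicator {-pi..pi} t * \<bar>sin t\<bar> powr (- 1 / 2)) \<le> 2 * (g 0 t + g pi t + g (- pi) t)"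
    proof (cases "t \<in> {-pi..pi} \<and> sin t \<noteq> 0")
      case True
      then have "ennreal (\<bar>sin t\<bar> powr (- 1 / 2))
          \<le> ennreal (2 * (\<bar>t\<bar> powr (- 1 / 2) + \<bar>t - pi\<bar> powr (- 1 / 2) + \<bar>t + pi\<bar> powr (- 1 / 2)))"
        by (intro ennreal_leI abs_sin_powr_neg_half_le) auto
      also have "\<dots> = 2 * (ennreal (\<bar>t\<bar> powr (- 1 / 2)) + ennreal (\<bar>t - pi\<bar> powr (- 1 / 2))
                           + ennreal (\<bar>t + pi\<bar> powr (- 1 / 2)))"
        by (subst ennreal_mult') auto
      finally show ?thesis using True by (simp add: g_def)
    qed (auto simp: g_def)
  qed
  also have "\<dots> = 2 * ((\<integral>\<^sup>+ t. g 0 t \<partial>lborel) + (\<integral>\<^sup>+ t. g pi t \<partial>lborel) + (\<integral>\<^sup>+ t. g (- pi) t \<partial>lborel))"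
    by (simp add: nn_integral_cmult nn_integral_add)
  also have "\<dots> < \<infinity>"
    using nn_integral_abs_powr_neg_half_finite[of pi 0] nn_integral_abs_powr_neg_half_finite[of pi pi]
      nn_integral_abs_powr_neg_half_finite[of pi "- pi"] by (simp add: g_def ennreal_mult_less_top)
  finally show ?thesis .
qed

lemma negligible_sin_eq_0: "negligible {u :: real^'n. sin (u $ i) = 0}"
proof -
  have "{u :: real^'n. sin (u $ i) = 0} = (\<Union>n::int. {u. u $ i = of_int n * pi})"
    by (auto simp: sin_zero_iff_int2)
  moreover have "negligible {u :: real^'n. u $ i = c}" for c
    using negligible_hyperplane[of "axis i (1::real)" c] by (simp add: inner_axis')
  ultimately show ?thesis by (auto intro!: negligible_countable_Union)
qed

lemma AE_sin_neq_0: "AE u in lborel. sin ((u :: real^'n) $ i) \<noteq> 0"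
proof -
  have S: "{u :: real^'n. sin (u $ i) = 0} \<in> sets lborel" by measurable
  then have "{u :: real^'n. sin (u $ i) = 0} \<in> null_sets lborel"
    using negligible_sin_eq_0 by (simp add: negligible_iff_null_sets null_sets_completion_iff)
  then show ?thesis using AE_iff_null_sets[OF S] by simp
qed

definition sin_sq_sum :: "real^8 \<Rightarrow> real" where
  "sin_sq_sum u = (\<Sum>l<8. (sin (u $ of_nat l))\<^sup>2)"

lemma E1_eq:
  "E1 x = (1 / (2 * pi) ^ 8) *\<^sub>R integral period_cube
     (\<lambda>u. (sin (u \<bullet> x) / sin_sq_sum u) *\<^sub>R (\<Sum>l<8. sin (u $ of_nat l) *\<^sub>R oconj (ev l)))"
  by (simp add: E1_def sin_sq_sum_def inner_vec_def sum_UNIV_8)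

lemma sin_ratio_le:
  assumes k: "k < 8" and "sin (u $ 0) \<noteq> 0" "sin (u $ 1) \<noteq> 0"
  shows "\<bar>sin a / sin_sq_sum u * sin (u $ of_nat k)\<bar>
       \<le> 1 / sqrt 2 * (\<bar>sin (u $ 0)\<bar> powr (- 1 / 2) * \<bar>sin (u $ 1)\<bar> powr (- 1 / 2))"
proof -
  define S where "S = sin_sq_sum u"
  define r0 where "r0 = \<bar>sin (u $ 0)\<bar>"
  define r1 where "r1 = \<bar>sin (u $ 1)\<bar>"
  have r: "r0 > 0" "r1 > 0" using assms by (auto simp: r0_def r1_def)
  have "(\<Sum>l\<in>{0,1::nat}. (sin (u $ of_nat l))\<^sup>2) \<le> (\<Sum>l<8. (sin (u $ of_nat l))\<^sup>2)"
    by (rule sum_mono2) auto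
  then have S01: "r0\<^sup>2 + r1\<^sup>2 \<le> S" by (simp add: S_def sin_sq_sum_def r0_def r1_def)
  have "(sin (u $ of_nat k))\<^sup>2 \<le> S"
    unfolding S_def sin_sq_sum_def by (rule member_le_sum) (use k in auto)
  then have sk: "\<bar>sin (u $ of_nat k)\<bar> \<le> sqrt S" using real_sqrt_le_mono by fastforce
  have amgm: "2 * r0 * r1 \<le> r0\<^sup>2 + r1\<^sup>2" using sum_squares_bound[of r0 r1] by simp
  have "0 < r0\<^sup>2 + r1\<^sup>2" using r by (simp add: add_pos_nonneg)
  with S01 have "S > 0" by linarith
  have "\<bar>sin a / S * sin (u $ of_nat k)\<bar> \<le> \<bar>sin (u $ of_nat k)\<bar> / S"
    using \<open>S > 0\<close> by (simp add: abs_mult divide_right_mono mult_left_le_one_le)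
  also have "\<dots> \<le> sqrt S / S" using sk \<open>S > 0\<close> by (simp add: divide_right_mono)
  also have "\<dots> = 1 / sqrt S"
    using \<open>S > 0\<close> by (simp add: field_simps real_sqrt_mult[symmetric] flip: power2_eq_square)
  also have "\<dots> \<le> 1 / sqrt (2 * r0 * r1)"
    using r amgm S01 \<open>S > 0\<close> by (intro divide_left_mono real_sqrt_le_mono mult_pos_pos) auto
  also have "\<dots> = 1 / sqrt 2 * (r0 powr (- 1 / 2) * r1 powr (- 1 / 2))"
    using r by (simp add: powr_minus_divide powr_half_sqrt real_sqrt_mult flip: powr_minus)
  finally show ?thesis by (simp add: S_def r0_def r1_def)
qed

text \<open>By the previous lemma the integrand of E1 is dominated on the cube by a product of
  one-dimensional factors, each integrable on [-pi, pi] since sin vanishes only to first order.\<close>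

definition E1_majorant :: "real^8 \<Rightarrow> real \<Rightarrow> real" where
  "E1_majorant b t =
     indicator {-pi..pi} t * (if b = axis 0 1 \<or> b = axis 1 1 then \<bar>sin t\<bar> powr (- 1 / 2) else 1)"

lemma integrable_E1_majorant: "integrable lborel (\<lambda>u::real^8. \<Prod>b\<in>Basis. E1_majorant b (u \<bullet> b))"
proof (subst integrable_iff_bounded, intro conjI)
  show "(\<lambda>u::real^8. \<Prod>b\<in>Basis. E1_majorant b (u \<bullet> b)) \<in> borel_measurable lborel"
    unfolding E1_majorant_def by measurable
  have nonneg: "E1_majorant b t \<ge> 0" for b t by (simp add: E1_majorant_def)
  have "(\<integral>\<^sup>+ u. ennreal (norm (\<Prod>b\<in>Basis. E1_majorant b (u \<bullet> b))) \<partial>lborel)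
      = (\<integral>\<^sup>+ u. (\<Prod>b\<in>(Basis::(real^8) set). ennreal (E1_majorant b (u \<bullet> b))) \<partial>lborel)"
    by (rule nn_integral_cong) (simp add: nonneg prod_nonneg prod_ennreal abs_prod)
  also have "\<dots> = (\<Prod>b\<in>(Basis::(real^8) set). (\<integral>\<^sup>+ t. E1_majorant b t \<partial>lborel))"
    by (rule nn_integral_lborel_prod) (auto simp: nonneg E1_majorant_def)
  also have "\<dots> < \<infinity>"
  proof -
    have "(\<integral>\<^sup>+ t. E1_majorant b t \<partial>lborel) < \<infinity>" for b
      using nn_integral_abs_sin_powr_neg_half_finite
      by (cases "b = axis 0 1 \<or> b = axis 1 1") (auto simp: E1_majorant_def ennreal_indicator)
    then show ?thesis by (simp add: less_top[symmetric] ennreal_prod_eq_top)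
  qed
  finally show "(\<integral>\<^sup>+ u. ennreal (norm (\<Prod>b\<in>Basis. E1_majorant b (u \<bullet> b))) \<partial>lborel) < \<infinity>" .
qed

lemma prod_E1_majorant:
  assumes "u \<in> period_cube"
  shows "(\<Prod>b\<in>Basis. E1_majorant b (u \<bullet> b)) = \<bar>sin (u $ 0)\<bar> powr (- 1 / 2) * \<bar>sin (u $ 1)\<bar> powr (- 1 / 2)"
proof -
  have "u $ i \<in> {-pi..pi}" for i using assms by (auto simp: mem_box_cart)
  then have "(\<Prod>b\<in>Basis. E1_majorant b (u \<bullet> b))
      = (\<Prod>i\<in>UNIV. if i \<in> {0, 1} then \<bar>sin (u $ i)\<bar> powr (- 1 / 2) else 1)"
    by (auto simp: prod_Basis_vec inner_axis E1_majorant_def axis_eq_axis intro!: prod.cong)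
  also have "\<dots> = (\<Prod>i\<in>{0,1}. \<bar>sin (u $ i)\<bar> powr (- 1 / 2))"
    by (rule prod.mono_neutral_cong_right) auto
  finally show ?thesis by simp
qed

lemma E1_integrand_integrable:
  assumes "k < 8"
  shows "(\<lambda>u. sin (u \<bullet> x) / sin_sq_sum u * sin (u $ of_nat k)) integrable_on period_cube"
proof -
  have "integrable lborel (\<lambda>u. indicator period_cube u *\<^sub>R (sin (u \<bullet> x) / sin_sq_sum u * sin (u $ of_nat k)))"
  proof (rule Bochner_Integration.integrable_bound[OF integrable_mult_right[OF integrable_E1_majorant]])
    show "(\<lambda>u. indicator period_cube u *\<^sub>R (sin (u \<bullet> x) / sin_sq_sum u * sin (u $ of_nat k))) \<in> borel_measurable lborel"
      unfolding sin_sq_sum_def by measurable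
    show "AE u in lborel. norm (indicator period_cube u *\<^sub>R (sin (u \<bullet> x) / sin_sq_sum u * sin (u $ of_nat k)))
            \<le> norm (1 / sqrt 2 * (\<Prod>b\<in>Basis. E1_majorant b (u \<bullet> b)))"
      using AE_sin_neq_0[of 0] AE_sin_neq_0[of 1]
    proof eventually_elim
      case (elim u)
      then show ?case
        using sin_ratio_le[OF assms] prod_E1_majorant[of u]
        by (cases "u \<in> period_cube") (auto simp: abs_mult)
    qed
  qed
  then show ?thesis
    by (intro set_borel_integral_eq_integral(1)) (simp add: set_integrable_def)
qed

definition E1_coeff :: "nat \<Rightarrow> real^8 \<Rightarrow> real" where
  "E1_coeff k x = integral period_cube (\<lambda>u. sin (u \<bullet> x) / sin_sq_sum u * sin (u $ of_nat k))"

lemma E1_eq_sum_coeff: "E1 x = (\<Sum>k<8. (E1_coeff k x / (2 * pi) ^ 8) *\<^sub>R oconj (ev k))"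
proof -
  define F where "F k u = (sin (u \<bullet> x) / sin_sq_sum u * sin (u $ of_nat k)) *\<^sub>R oconj (ev k)" for k u
  have int: "F k integrable_on period_cube" if "k < 8" for k
    unfolding F_def by (intro integrable_on_scaleR_left E1_integrand_integrable that)
  have coeff: "integral period_cube (F k) = E1_coeff k x *\<^sub>R oconj (ev k)" if "k < 8" for k
    unfolding E1_coeff_def F_def
    by (rule integral_unique[OF has_integral_scaleR_left[OF integrable_integral]])
       (rule E1_integrand_integrable[OF that])
  have "E1 x = (1 / (2 * pi) ^ 8) *\<^sub>R integral period_cube (\<lambda>u. \<Sum>k<8. F k u)"
    by (simp add: E1_eq F_def scaleR_sum_right)
  also have "integral period_cube (\<lambda>u. \<Sum>k<8. F k u) = (\<Sum>k<8. E1_coeff k x *\<^sub>R oconj (ev k))"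
    by (subst integral_sum) (auto simp: int coeff)
  finally show ?thesis by (simp add: scaleR_sum_right)
qed

definition E1_diff_coeff :: "real^8 \<Rightarrow> nat \<Rightarrow> nat \<Rightarrow> real" where
  "E1_diff_coeff w k l =
     integral period_cube (\<lambda>u. 2 * cos (u \<bullet> w) * (sin (u $ of_nat l) * sin (u $ of_nat k)) / sin_sq_sum u)"

lemma E1_diff_coeff_commute: "E1_diff_coeff w k l = E1_diff_coeff w l k"
  unfolding E1_diff_coeff_def by (simp add: mult.commute)

lemma sin_central_diff:
  "l < 8 \<Longrightarrow> sin (u \<bullet> (w + ev l)) - sin (u \<bullet> (w - ev l)) = 2 * cos (u \<bullet> w) * sin (u $ of_nat l)"
  by (simp add: inner_add_right inner_diff_right ev_def inner_axis sin_add sin_diff)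

lemma E1_diff_integrand_eq:
  "l < 8 \<Longrightarrow> 2 * cos (u \<bullet> w) * (sin (u $ of_nat l) * sin (u $ of_nat k)) / sin_sq_sum u
     = sin (u \<bullet> (w + ev l)) / sin_sq_sum u * sin (u $ of_nat k)
       - sin (u \<bullet> (w - ev l)) / sin_sq_sum u * sin (u $ of_nat k)"
  using sin_central_diff[of l u w] by (cases "sin_sq_sum u = 0") (simp_all add: field_simps)

lemma E1_diff_integrand_integrable:
  "k < 8 \<Longrightarrow> l < 8 \<Longrightarrow>
    (\<lambda>u. 2 * cos (u \<bullet> w) * (sin (u $ of_nat l) * sin (u $ of_nat k)) / sin_sq_sum u) integrable_on period_cube"
  unfolding E1_diff_integrand_eq by (intro integrable_diff E1_integrand_integrable)

lemma E1_coeff_central_diff: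
  assumes "k < 8" "l < 8"
  shows "E1_coeff k (w + ev l) - E1_coeff k (w - ev l) = E1_diff_coeff w k l"
  unfolding E1_coeff_def E1_diff_coeff_def E1_diff_integrand_eq[OF assms(2)]
  by (intro integral_diff[symmetric] E1_integrand_integrable assms)

lemma E1_central_diff:
  "l < 8 \<Longrightarrow> E1 (w + ev l) - E1 (w - ev l) = (\<Sum>k<8. (E1_diff_coeff w k l / (2 * pi) ^ 8) *\<^sub>R oconj (ev k))"
  by (simp add: E1_eq_sum_coeff E1_coeff_central_diff flip: sum_subtractf scaleR_diff_left diff_divide_distrib)

text \<open>The trace of the difference coefficients is a Fourier integral of the lattice delta, because
  the factor sin_sq_sum cancels.\<close>

lemma E1_diff_coeff_trace:
  assumes w: "\<forall>i. w $ i \<in> \<int>"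
  shows "(\<Sum>k<8. E1_diff_coeff w k k) = (if w = 0 then 2 * (2 * pi) ^ 8 else 0)"
proof -
  have "(\<Sum>k<8. E1_diff_coeff w k k)
      = integral period_cube (\<lambda>u. \<Sum>k<8. 2 * cos (u \<bullet> w) * (sin (u $ of_nat k) * sin (u $ of_nat k)) / sin_sq_sum u)"
    unfolding E1_diff_coeff_def by (rule integral_sum[symmetric]) (auto intro: E1_diff_integrand_integrable)
  also have "\<dots> = integral period_cube (\<lambda>u. 2 * cos (u \<bullet> w))"
  proof (rule integral_spike[OF negligible_sin_eq_0[of 0]])
    fix u :: "real^8" assume "u \<in> period_cube - {u. sin (u $ 0) = 0}"
    moreover have "(sin (u $ of_nat 0))\<^sup>2 \<le> sin_sq_sum u"
      unfolding sin_sq_sum_def by (rule member_le_sum) auto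
    ultimately have "sin_sq_sum u \<noteq> 0" by (auto simp: order_less_le)
    then show "2 * cos (u \<bullet> w)
        = (\<Sum>k<8. 2 * cos (u \<bullet> w) * (sin (u $ of_nat k) * sin (u $ of_nat k)) / sin_sq_sum u)"
      by (simp add: sin_sq_sum_def power2_eq_square flip: sum_divide_distrib sum_distrib_left)
  qed
  also have "\<dots> = (if w = 0 then 2 * (2 * pi) ^ 8 else 0)"
    using integral_period_cube_cos[OF w]
    by (simp add: integral_mult[symmetric] integrable_continuous continuous_intros)
  finally show ?thesis .
qed

lemma sum_symmetric_anticommutator:
  fixes a :: "'i \<Rightarrow> 'i \<Rightarrow> real" and X :: "'i \<Rightarrow> 'i \<Rightarrow> 'a::real_vector"
  assumes "finite I"
    and sym: "\<And>k l. k \<in> I \<Longrightarrow> l \<in> I \<Longrightarrow> a k l = a l k"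
    and anti: "\<And>k l. k \<in> I \<Longrightarrow> l \<in> I \<Longrightarrow> X k l + X l k = (if k = l then 2 else 0) *\<^sub>R c"
  shows "(\<Sum>k\<in>I. \<Sum>l\<in>I. a k l *\<^sub>R X k l) = (\<Sum>k\<in>I. a k k) *\<^sub>R c"
proof -
  define S where "S = (\<Sum>k\<in>I. \<Sum>l\<in>I. a k l *\<^sub>R X k l)"
  have "S = (\<Sum>k\<in>I. \<Sum>l\<in>I. a k l *\<^sub>R X l k)"
    unfolding S_def by (subst sum.swap) (intro sum.cong refl, simp add: sym)
  then have "2 *\<^sub>R S = (\<Sum>k\<in>I. \<Sum>l\<in>I. a k l *\<^sub>R (X k l + X l k))"
    by (simp add: S_def scaleR_2 scaleR_add_right sum.distrib)
  also have "\<dots> = (\<Sum>k\<in>I. (2 * a k k) *\<^sub>R c)"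
  proof (rule sum.cong[OF refl])
    fix k assume "k \<in> I"
    then have "(\<Sum>l\<in>I. a k l *\<^sub>R (X k l + X l k)) = (\<Sum>l\<in>I. if k = l then (2 * a k k) *\<^sub>R c else 0)"
      by (intro sum.cong refl) (simp add: anti)
    then show "(\<Sum>l\<in>I. a k l *\<^sub>R (X k l + X l k)) = (2 * a k k) *\<^sub>R c"
      using \<open>finite I\<close> \<open>k \<in> I\<close> by simp
  qed
  also have "\<dots> = 2 *\<^sub>R ((\<Sum>k\<in>I. a k k) *\<^sub>R c)"
    by (simp add: scaleR_sum_left[symmetric] sum_distrib_left)
  finally have "2 *\<^sub>R S = 2 *\<^sub>R ((\<Sum>k\<in>I. a k k) *\<^sub>R c)" .
  then show ?thesis by (subst (asm) scaleR_cancel_left) (simp add: S_def)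
qed

lemma E1_right_fundamental:
  assumes "\<forall>i. w $ i \<in> \<int>"
  shows "(\<Sum>l<8. omult (E1 (w + ev l) - E1 (w - ev l)) (omult (ev l) c)) = (if w = 0 then 2 else 0) *\<^sub>R c"
proof -
  have "(\<Sum>l<8. omult (E1 (w + ev l) - E1 (w - ev l)) (omult (ev l) c))
      = (\<Sum>k<8. \<Sum>l<8. (E1_diff_coeff w k l / (2 * pi) ^ 8) *\<^sub>R omult (oconj (ev k)) (omult (ev l) c))"
    by (subst sum.swap) (simp add: E1_central_diff omult.sum_left omult.scaleR_left)
  also have "\<dots> = (\<Sum>k<8. E1_diff_coeff w k k / (2 * pi) ^ 8) *\<^sub>R c"
    by (rule sum_symmetric_anticommutator) (simp_all add: E1_diff_coeff_commute oconj_ev_anticommute)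
  finally show ?thesis using E1_diff_coeff_trace[OF assms] by (simp flip: sum_divide_distrib)
qed

lemma E1_left_fundamental:
  assumes "\<forall>i. w $ i \<in> \<int>"
  shows "(\<Sum>k<8. omult (ev k) (omult (E1 (w + ev k) - E1 (w - ev k)) d)) = (if w = 0 then 2 else 0) *\<^sub>R d"
proof -
  have "(\<Sum>k<8. omult (ev k) (omult (E1 (w + ev k) - E1 (w - ev k)) d))
      = (\<Sum>k<8. \<Sum>j<8. (E1_diff_coeff w j k / (2 * pi) ^ 8) *\<^sub>R omult (ev k) (omult (oconj (ev j)) d))"
    by (simp add: E1_central_diff omult.sum_left omult.scaleR_left omult.sum_right omult.scaleR_right)
  also have "\<dots> = (\<Sum>k<8. E1_diff_coeff w k k / (2 * pi) ^ 8) *\<^sub>R d"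
    by (rule sum_symmetric_anticommutator) (simp_all add: E1_diff_coeff_commute oconj_ev_anticommute)
  finally show ?thesis using E1_diff_coeff_trace[OF assms] by (simp flip: sum_divide_distrib)
qed

section \<open>The lattice and the boundary of B\<close>

lemma lattice_add: "x \<in> lattice h \<Longrightarrow> y \<in> lattice h \<Longrightarrow> x + y \<in> lattice h"
  unfolding lattice_def
proof clarsimp
  fix i assume "\<forall>i. \<exists>k::int. x $ i = h * k" "\<forall>i. \<exists>k::int. y $ i = h * k"
  then obtain k1 k2 :: int where "x $ i = h * k1" "y $ i = h * k2" by blast
  then show "\<exists>k::int. x $ i + y $ i = h * k" by (intro exI[of _ "k1 + k2"]) (simp add: distrib_left)
qed

lemma lattice_uminus: "x \<in> lattice h \<Longrightarrow> - x \<in> lattice h"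
  unfolding lattice_def
proof clarsimp
  fix i assume "\<forall>i. \<exists>k::int. x $ i = h * k"
  then obtain k :: int where "x $ i = h * k" by blast
  then show "\<exists>k::int. - x $ i = h * k" by (intro exI[of _ "- k"]) simp
qed

lemma lattice_diff: "x \<in> lattice h \<Longrightarrow> y \<in> lattice h \<Longrightarrow> x - y \<in> lattice h"
  using lattice_add[OF _ lattice_uminus, of x h y] by simp

lemma scaled_ev_in_lattice: "h *\<^sub>R ev l \<in> lattice h"
  unfolding lattice_def mem_Collect_eq
proof
  fix i show "\<exists>k::int. (h *\<^sub>R ev l) $ i = h * k"
    by (rule exI[of _ "if i = of_nat l then 1 else 0"]) (simp add: ev_def axis_def)
qed

lemma lattice_scaled_int:
  assumes "h > 0" "z \<in> lattice h"
  shows "\<forall>i. ((1 / h) *\<^sub>R z) $ i \<in> \<int>"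
proof
  fix i
  obtain k :: int where "z $ i = h * k" using assms(2) unfolding lattice_def by blast
  then show "((1 / h) *\<^sub>R z) $ i \<in> \<int>" using assms(1) by simp
qed

lemma Eh_translate:
  assumes "h > 0"
  shows "Eh h (z + h *\<^sub>R ev l) = (1 / h ^ 7) *\<^sub>R E1 ((1 / h) *\<^sub>R z + ev l)"
    and "Eh h (z - h *\<^sub>R ev l) = (1 / h ^ 7) *\<^sub>R E1 ((1 / h) *\<^sub>R z - ev l)"
  using assms by (simp_all add: Eh_def scaleR_add_right scaleR_diff_right)

lemma Eh_right_fundamental:
  assumes "h > 0" "z \<in> lattice h"
  shows "(\<Sum>l<8. omult (Eh h (z + h *\<^sub>R ev l) - Eh h (z - h *\<^sub>R ev l)) (omult (ev l) c))
       = (if z = 0 then 2 / h ^ 7 else 0) *\<^sub>R c"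
proof -
  define w where "w = (1 / h) *\<^sub>R z"
  have "w = 0 \<longleftrightarrow> z = 0" using assms(1) by (simp add: w_def)
  moreover have "(\<Sum>l<8. omult (Eh h (z + h *\<^sub>R ev l) - Eh h (z - h *\<^sub>R ev l)) (omult (ev l) c))
      = (1 / h ^ 7) *\<^sub>R (\<Sum>l<8. omult (E1 (w + ev l) - E1 (w - ev l)) (omult (ev l) c))"
    by (simp add: Eh_translate[OF assms(1)] w_def omult.scaleR_left scaleR_sum_right flip: scaleR_diff_right)
  ultimately show ?thesis
    using E1_right_fundamental[OF lattice_scaled_int[OF assms], of c] by (simp add: w_def)
qed

lemma Eh_left_fundamental:
  assumes "h > 0" "z \<in> lattice h"
  shows "(\<Sum>k<8. omult (ev k) (omult (Eh h (z + h *\<^sub>R ev k) - Eh h (z - h *\<^sub>R ev k)) d))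
       = (if z = 0 then 2 / h ^ 7 else 0) *\<^sub>R d"
proof -
  define w where "w = (1 / h) *\<^sub>R z"
  have "w = 0 \<longleftrightarrow> z = 0" using assms(1) by (simp add: w_def)
  moreover have "(\<Sum>k<8. omult (ev k) (omult (Eh h (z + h *\<^sub>R ev k) - Eh h (z - h *\<^sub>R ev k)) d))
      = (1 / h ^ 7) *\<^sub>R (\<Sum>k<8. omult (ev k) (omult (E1 (w + ev k) - E1 (w - ev k)) d))"
    by (simp add: Eh_translate[OF assms(1)] w_def omult.scaleR_left omult.scaleR_right scaleR_sum_right
        flip: scaleR_diff_right)
  ultimately show ?thesis
    using E1_left_fundamental[OF lattice_scaled_int[OF assms], of d] by (simp add: w_def)
qed

lemma bounded_lattice_subset_finite:
  assumes h: "h > 0" and B: "B \<subseteq> lattice h" "bounded B"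
  shows "finite B"
proof -
  obtain M where M: "\<And>x. x \<in> B \<Longrightarrow> norm x \<le> M" using B(2) by (auto simp: bounded_iff)
  define f where "f x = (\<lambda>i. \<lfloor>x $ i / h\<rfloor>)" for x :: "real^8"
  have fx: "x $ i = h * of_int (f x i)" if "x \<in> B" for x i
  proof -
    have "x \<in> lattice h" using B(1) that by blast
    then obtain k :: int where "x $ i = h * k" unfolding lattice_def by blast
    then show ?thesis using h by (simp add: f_def)
  qed
  then have "inj_on f B" by (metis inj_onI vec_eq_iff)
  define N where "N = \<lceil>M / h\<rceil>"
  have "f ` B \<subseteq> PiE UNIV (\<lambda>_. {-N..N})"
  proof clarify
    fix x assume x: "x \<in> B"
    have "\<bar>f x i\<bar> \<le> N" for i
    proof -
      have "\<bar>h * of_int (f x i)\<bar> \<le> M" using M[OF x] component_le_norm_cart[of x i] fx[OF x] by simp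
      then have "real_of_int \<bar>f x i\<bar> \<le> M / h" using h by (simp add: abs_mult field_simps)
      then show ?thesis unfolding N_def by linarith
    qed
    then have "- N \<le> f x i \<and> f x i \<le> N" for i by (metis abs_le_iff minus_le_iff)
    then show "f x \<in> PiE UNIV (\<lambda>_. {-N..N})" by auto
  qed
  then have "finite (f ` B)" by (rule finite_subset) (rule finite_PiE; simp)
  then show ?thesis using \<open>inj_on f B\<close> by (rule finite_imageD)
qed

lemma dbound_subset_lattice: "dbound h B \<subseteq> lattice h"
  unfolding dbound_def by auto

lemma finite_dbound:
  assumes "finite B"
  shows "finite (dbound h B)"
proof (rule finite_subset)
  show "dbound h B \<subseteq> (\<Union>b\<in>B. nbhd h b)"
  proof
    fix x assume "x \<in> dbound h B"
    then obtain b where "b \<in> B" "b \<in> nbhd h x" unfolding dbound_def by blast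
    then show "x \<in> (\<Union>b\<in>B. nbhd h b)" by (auto simp: nbhd_def algebra_simps)
  qed
  show "finite (\<Union>b\<in>B. nbhd h b)" using assms by (simp add: nbhd_def)
qed

text \<open>jump_minus h B l x = h * dminus h l (chi B) x and jump_plus h B l x = h * dplus h l (chi B) x.\<close>

definition jump_minus :: "real \<Rightarrow> (real^8) set \<Rightarrow> nat \<Rightarrow> real^8 \<Rightarrow> real" where
  "jump_minus h B l x = chi B x - chi B (x - h *\<^sub>R ev l)"

definition jump_plus :: "real \<Rightarrow> (real^8) set \<Rightarrow> nat \<Rightarrow> real^8 \<Rightarrow> real" where
  "jump_plus h B l x = chi B (x + h *\<^sub>R ev l) - chi B x"

lemma edge_crossing_in_dbound:
  assumes "B \<subseteq> lattice h" "l < 8" "(x \<in> B) \<noteq> (x + a \<in> B)" "a \<in> {h *\<^sub>R ev l, - (h *\<^sub>R ev l)}"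
  shows "x \<in> dbound h B"
proof -
  have "a \<in> lattice h" using assms(4) scaled_ev_in_lattice lattice_uminus by blast
  then have "x \<in> lattice h"
    using assms(1,3) lattice_diff[of "x + a" h a] by (cases "x \<in> B") auto
  moreover have "x + a \<in> lattice h" using lattice_add[OF \<open>x \<in> lattice h\<close> \<open>a \<in> lattice h\<close>] .
  moreover have "x \<in> nbhd h x" "x + a \<in> nbhd h x" using assms(2,4) by (auto simp: nbhd_def)
  ultimately show ?thesis using assms(3) unfolding dbound_def by blast
qed

lemma jump_minus_nonzero_imp_dbound:
  "B \<subseteq> lattice h \<Longrightarrow> l < 8 \<Longrightarrow> jump_minus h B l x \<noteq> 0 \<Longrightarrow> x \<in> dbound h B"
  using edge_crossing_in_dbound[of B h l x "- (h *\<^sub>R ev l)"]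
  by (cases "x \<in> B"; cases "x - h *\<^sub>R ev l \<in> B") (auto simp: jump_minus_def chi_def)

lemma jump_plus_nonzero_imp_dbound:
  "B \<subseteq> lattice h \<Longrightarrow> l < 8 \<Longrightarrow> jump_plus h B l x \<noteq> 0 \<Longrightarrow> x \<in> dbound h B"
  using edge_crossing_in_dbound[of B h l x "h *\<^sub>R ev l"]
  by (cases "x \<in> B"; cases "x + h *\<^sub>R ev l \<in> B") (auto simp: jump_plus_def chi_def)

lemma sum_indicator_translate:
  fixes \<Phi> :: "'a::ab_group_add \<Rightarrow> 'b::real_vector"
  assumes "finite U" "(\<lambda>b. b + a) ` B \<subseteq> U"
  shows "(\<Sum>x\<in>U. indicator B (x - a) *\<^sub>R \<Phi> x) = (\<Sum>b\<in>B. \<Phi> (b + a))"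
proof -
  have mem: "x - a \<in> B \<longleftrightarrow> x \<in> (\<lambda>b. b + a) ` B" for x
  proof
    assume "x - a \<in> B"
    then show "x \<in> (\<lambda>b. b + a) ` B" by (rule image_eqI[rotated]) simp
  qed auto
  have "(\<Sum>x\<in>U. indicator B (x - a) *\<^sub>R \<Phi> x) = (\<Sum>x\<in>U. if x \<in> (\<lambda>b. b + a) ` B then \<Phi> x else 0)"
    by (intro sum.cong refl) (simp add: indicator_def mem)
  also have "\<dots> = (\<Sum>x\<in>(\<lambda>b. b + a) ` B. \<Phi> x)"
    using assms by (simp add: sum.inter_restrict[symmetric] Int_absorb1)
  also have "\<dots> = (\<Sum>b\<in>B. \<Phi> (b + a))" by (simp add: sum.reindex inj_on_def)
  finally show ?thesis .
qed

text \<open>Discrete summation by parts: the sum of a function against the jumps of the indicator of B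
  across the edges in direction a telescopes to a sum over B.\<close>

lemma sum_indicator_jump:
  fixes \<Phi> :: "'a::ab_group_add \<Rightarrow> 'b::real_vector"
  assumes "finite B" "finite S" "\<And>x. indicator B x \<noteq> (indicator B (x - a) :: real) \<Longrightarrow> x \<in> S"
  shows "(\<Sum>x\<in>S. (indicator B x - indicator B (x - a)) *\<^sub>R \<Phi> x) = (\<Sum>b\<in>B. \<Phi> b - \<Phi> (b + a))"
proof -
  define U where "U = S \<union> B \<union> (\<lambda>b. b + a) ` B"
  have U: "finite U" "(\<lambda>b. b + 0) ` B \<subseteq> U" "(\<lambda>b. b + a) ` B \<subseteq> U"
    using assms(1,2) by (auto simp: U_def)
  have "(indicator B x - indicator B (x - a)) *\<^sub>R \<Phi> x = 0" if "x \<notin> S" for x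
    using assms(3) that by fastforce
  then have "(\<Sum>x\<in>S. (indicator B x - indicator B (x - a)) *\<^sub>R \<Phi> x)
      = (\<Sum>x\<in>U. (indicator B x - indicator B (x - a)) *\<^sub>R \<Phi> x)"
    using U(1) by (intro sum.mono_neutral_left) (auto simp: U_def)
  also have "\<dots> = (\<Sum>x\<in>U. indicator B (x - 0) *\<^sub>R \<Phi> x) - (\<Sum>x\<in>U. indicator B (x - a) *\<^sub>R \<Phi> x)"
    by (simp add: scaleR_diff_left sum_subtractf)
  also have "\<dots> = (\<Sum>b\<in>B. \<Phi> (b + 0)) - (\<Sum>b\<in>B. \<Phi> (b + a))"
    by (simp only: sum_indicator_translate[OF U(1) U(2)] sum_indicator_translate[OF U(1) U(3)])
  finally show ?thesis by (simp add: sum_subtractf)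
qed

section \<open>The discrete Cauchy operator\<close>

text \<open>cauchy_kernel h B x y v is 2 s(x) (K^h(x,y) * v): the root of Sig in s(x) cancels against the
  normals, which leaves the jumps of chi B.\<close>

definition cauchy_kernel :: "real \<Rightarrow> (real^8) set \<Rightarrow> real^8 \<Rightarrow> real^8 \<Rightarrow> octo \<Rightarrow> octo" where
  "cauchy_kernel h B x y v = h ^ 7 *\<^sub>R
     (\<Sum>l<8. jump_minus h B l x *\<^sub>R omult (Eh h (y - (x - h *\<^sub>R ev l))) (omult (ev l) v)
           + jump_plus h B l x *\<^sub>R omult (Eh h (y - (x + h *\<^sub>R ev l))) (omult (ev l) v))"

definition cauchy_op :: "real \<Rightarrow> (real^8) set \<Rightarrow> (real^8 \<Rightarrow> octo) \<Rightarrow> real^8 \<Rightarrow> octo" where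
  "cauchy_op h B F y = (\<Sum>x\<in>dbound h B. cauchy_kernel h B x y (F x))"

definition dirac :: "real \<Rightarrow> (real^8 \<Rightarrow> octo) \<Rightarrow> real^8 \<Rightarrow> octo" where
  "dirac h F x = (\<Sum>l<8. omult (ev l) (F (x + h *\<^sub>R ev l) - F (x - h *\<^sub>R ev l)))"

lemma jumps_eq_0_if_Sig_eq_0:
  assumes "h > 0" "Sig h B x = 0" "l < 8"
  shows "jump_minus h B l x = 0" "jump_plus h B l x = 0"
proof -
  have "\<forall>l\<in>{..<8}. (dplus h l (chi B) x)\<^sup>2 + (dminus h l (chi B) x)\<^sup>2 = 0"
    using assms(2) unfolding Sig_def by (subst sum_nonneg_eq_0_iff[symmetric]) auto
  then have "dplus h l (chi B) x = 0" "dminus h l (chi B) x = 0"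
    using assms(3) by (auto simp: add_nonneg_eq_0_iff)
  then show "jump_minus h B l x = 0" "jump_plus h B l x = 0"
    using assms(1) by (auto simp: dplus_def dminus_def jump_minus_def jump_plus_def)
qed

lemma sarea_kstar_eq_cauchy_kernel:
  assumes "h > 0"
  shows "(2 * sarea h B x) *\<^sub>R kstar h B x y v = cauchy_kernel h B x y v"
proof (cases "Sig h B x = 0")
  case True
  then show ?thesis using jumps_eq_0_if_Sig_eq_0[OF assms True] by (simp add: sarea_def cauchy_kernel_def)
next
  case False
  have "Sig h B x \<ge> 0" unfolding Sig_def by (intro sum_nonneg) auto
  with False have s: "sqrt (Sig h B x) > 0" by simp
  define C where "C = 2 * sarea h B x * (- 1 / 2)"
  have h8: "h ^ 8 = h * h ^ 7" by (simp flip: power_Suc)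
  have c: "C * nminus h B l x = h ^ 7 * jump_minus h B l x" "C * nplus h B l x = h ^ 7 * jump_plus h B l x" for l
    using s assms
    by (simp_all add: C_def sarea_def nminus_def nplus_def dminus_def dplus_def jump_minus_def jump_plus_def
        h8 field_simps)
  have "(2 * sarea h B x) *\<^sub>R kstar h B x y v = C *\<^sub>R (\<Sum>l<8. omult (nminus h B l x *\<^sub>R Eh h (h *\<^sub>R ev l - x + y)
      + nplus h B l x *\<^sub>R Eh h (- (h *\<^sub>R ev l) - x + y)) (omult (ev l) v))"
    by (simp add: C_def kstar_def)
  also have "\<dots> = (\<Sum>l<8. (C * nminus h B l x) *\<^sub>R omult (Eh h (h *\<^sub>R ev l - x + y)) (omult (ev l) v)
      + (C * nplus h B l x) *\<^sub>R omult (Eh h (- (h *\<^sub>R ev l) - x + y)) (omult (ev l) v))"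
    by (simp add: scaleR_sum_right omult.add_left omult.scaleR_left scaleR_add_right)
  also have "\<dots> = cauchy_kernel h B x y v"
    by (simp add: c cauchy_kernel_def scaleR_sum_right scaleR_add_right algebra_simps)
  finally show ?thesis .
qed

lemma linear_cauchy_kernel: "linear (cauchy_kernel h B x y)"
  by (rule linearI)
     (simp_all add: cauchy_kernel_def omult.add_right omult.scaleR_right scaleR_add_right
       scaleR_sum_right sum.distrib algebra_simps)

lemma cauchy_op_add: "cauchy_op h B (\<lambda>x. F x + G x) y = cauchy_op h B F y + cauchy_op h B G y"
  by (simp add: cauchy_op_def linear_add[OF linear_cauchy_kernel] sum.distrib)

lemma cauchy_op_diff: "cauchy_op h B (\<lambda>x. F x - G x) y = cauchy_op h B F y - cauchy_op h B G y"
  by (simp add: cauchy_op_def linear_diff[OF linear_cauchy_kernel] sum_subtractf)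

lemma cauchy_op_scaleR: "cauchy_op h B (\<lambda>x. c *\<^sub>R F x) y = c *\<^sub>R cauchy_op h B F y"
  by (simp add: cauchy_op_def linear_scale[OF linear_cauchy_kernel] scaleR_sum_right)

lemma cauchy_op_cong: "(\<And>x. x \<in> dbound h B \<Longrightarrow> F x = G x) \<Longrightarrow> cauchy_op h B F y = cauchy_op h B G y"
  by (simp add: cauchy_op_def)

lemma Sop_eq_cauchy_op:
  assumes "h > 0"
  shows "Sop h B g y = cauchy_op h B g y - cauchy_op h B (\<lambda>_. g y) y + g y"
proof -
  have "Sop h B g y = (\<Sum>x\<in>dbound h B. (2 * sarea h B x) *\<^sub>R kstar h B x y (g x - g y)) + g y"
    by (simp add: Sop_def bint_def scaleR_sum_right)
  then show ?thesis
    by (simp add: sarea_kstar_eq_cauchy_kernel[OF assms] cauchy_op_def linear_diff[OF linear_cauchy_kernel]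
        sum_subtractf)
qed

lemma dirac_add: "dirac h (\<lambda>y. F y + G y) x = dirac h F x + dirac h G x"
  by (simp add: dirac_def add_diff_add omult.add_right sum.distrib)

lemma dirac_scaleR: "dirac h (\<lambda>y. c *\<^sub>R F y) x = c *\<^sub>R dirac h F x"
  by (simp add: dirac_def omult.scaleR_right scaleR_sum_right flip: scaleR_diff_right)

lemma dirac_sum: "dirac h (\<lambda>y. \<Sum>i\<in>I. F i y) x = (\<Sum>i\<in>I. dirac h (F i) x)"
  by (simp add: dirac_def omult.sum_right sum_subtractf[symmetric] omult.diff_right) (rule sum.swap)

lemma dirac_const: "dirac h (\<lambda>_. c) x = 0"
  by (simp add: dirac_def omult.zero_right)

lemma dirac_Eh_translate:
  assumes "h > 0" "x \<in> lattice h" "p \<in> lattice h"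
  shows "dirac h (\<lambda>y. omult (Eh h (y - p)) v) x = (if x = p then 2 / h ^ 7 else 0) *\<^sub>R v"
  using Eh_left_fundamental[OF assms(1) lattice_diff[OF assms(2,3)], of v]
  by (simp add: dirac_def omult.diff_left algebra_simps)

lemma sum_delta_scaleR:
  fixes f :: "'a \<Rightarrow> 'b::real_vector"
  assumes "finite S" "c p \<noteq> 0 \<Longrightarrow> p \<in> S"
  shows "(\<Sum>x\<in>S. (if x = p then c x else 0) *\<^sub>R f x) = c p *\<^sub>R f p"
proof -
  have "(\<Sum>x\<in>S. (if x = p then c x else 0) *\<^sub>R f x) = (\<Sum>x\<in>S. if x = p then c p *\<^sub>R f p else 0)"
    by (rule sum.cong) auto
  also have "\<dots> = c p *\<^sub>R f p" using assms by auto
  finally show ?thesis .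
qed

locale lattice_region =
  fixes h :: real and B :: "(real^8) set"
  assumes h_pos: "h > 0" and B_lattice: "B \<subseteq> lattice h" and B_finite: "finite B"
begin

lemma sum_jump_minus:
  fixes \<Phi> :: "real^8 \<Rightarrow> 'a::real_vector"
  assumes "l < 8"
  shows "(\<Sum>x\<in>dbound h B. jump_minus h B l x *\<^sub>R \<Phi> x) = (\<Sum>b\<in>B. \<Phi> b - \<Phi> (b + h *\<^sub>R ev l))"
  unfolding jump_minus_def chi_def
  by (rule sum_indicator_jump[OF B_finite finite_dbound[OF B_finite]])
     (use jump_minus_nonzero_imp_dbound[OF B_lattice assms] in \<open>auto simp: jump_minus_def chi_def\<close>)

lemma sum_jump_plus:
  fixes \<Phi> :: "real^8 \<Rightarrow> 'a::real_vector"
  assumes "l < 8"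
  shows "(\<Sum>x\<in>dbound h B. jump_plus h B l x *\<^sub>R \<Phi> x) = (\<Sum>b\<in>B. \<Phi> (b - h *\<^sub>R ev l) - \<Phi> b)"
proof -
  have "(\<Sum>x\<in>dbound h B. (indicator B x - indicator B (x - - (h *\<^sub>R ev l))) *\<^sub>R \<Phi> x)
      = (\<Sum>b\<in>B. \<Phi> b - \<Phi> (b + - (h *\<^sub>R ev l)))"
    by (rule sum_indicator_jump[OF B_finite finite_dbound[OF B_finite]])
       (use jump_plus_nonzero_imp_dbound[OF B_lattice assms] in \<open>auto simp: jump_plus_def chi_def\<close>)
  then have "(\<Sum>x\<in>dbound h B. (indicator B x - indicator B (x + h *\<^sub>R ev l)) *\<^sub>R \<Phi> x)
      = (\<Sum>b\<in>B. \<Phi> b - \<Phi> (b - h *\<^sub>R ev l))"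
    by (simp only: diff_minus_eq_add add_uminus_conv_diff)
  moreover have "jump_plus h B l x *\<^sub>R \<Phi> x = - ((indicator B x - indicator B (x + h *\<^sub>R ev l)) *\<^sub>R \<Phi> x)" for x
    by (simp add: jump_plus_def chi_def algebra_simps)
  ultimately show ?thesis by (simp add: sum_negf sum_subtractf)
qed

lemma cauchy_op_by_parts:
  "cauchy_op h B F y = h ^ 7 *\<^sub>R (\<Sum>b\<in>B. \<Sum>l<8.
      omult (Eh h (y - b + h *\<^sub>R ev l) - Eh h (y - b - h *\<^sub>R ev l)) (omult (ev l) (F b))
    - omult (Eh h (y - b)) (omult (ev l) (F (b + h *\<^sub>R ev l) - F (b - h *\<^sub>R ev l))))"
proof -
  define P where "P l a x = omult (Eh h (y - (x + a))) (omult (ev l) (F x))" for l a x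
  have "cauchy_op h B F y = h ^ 7 *\<^sub>R (\<Sum>l<8.
      (\<Sum>x\<in>dbound h B. jump_minus h B l x *\<^sub>R P l (- (h *\<^sub>R ev l)) x)
    + (\<Sum>x\<in>dbound h B. jump_plus h B l x *\<^sub>R P l (h *\<^sub>R ev l) x))"
    unfolding cauchy_op_def cauchy_kernel_def P_def
    by (simp add: scaleR_sum_right sum.distrib[symmetric]) (rule sum.swap)
  also have "\<dots> = h ^ 7 *\<^sub>R (\<Sum>l<8. \<Sum>b\<in>B.
      (P l (- (h *\<^sub>R ev l)) b - P l (- (h *\<^sub>R ev l)) (b + h *\<^sub>R ev l))
    + (P l (h *\<^sub>R ev l) (b - h *\<^sub>R ev l) - P l (h *\<^sub>R ev l) b))"
    by (simp add: sum_jump_minus sum_jump_plus sum.distrib)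
  also have "\<dots> = h ^ 7 *\<^sub>R (\<Sum>b\<in>B. \<Sum>l<8.
      omult (Eh h (y - b + h *\<^sub>R ev l) - Eh h (y - b - h *\<^sub>R ev l)) (omult (ev l) (F b))
    - omult (Eh h (y - b)) (omult (ev l) (F (b + h *\<^sub>R ev l) - F (b - h *\<^sub>R ev l))))"
    by (subst sum.swap)
       (simp add: P_def omult.diff_left omult.diff_right algebra_simps diff_diff_eq2)
  finally show ?thesis .
qed

theorem cauchy_pompeiu:
  assumes "y \<in> lattice h"
  shows "cauchy_op h B F y = (if y \<in> B then 2 else 0) *\<^sub>R F y - h ^ 7 *\<^sub>R (\<Sum>b\<in>B. omult (Eh h (y - b)) (dirac h F b))"
proof -
  have "(\<Sum>l<8. omult (Eh h (y - b + h *\<^sub>R ev l) - Eh h (y - b - h *\<^sub>R ev l)) (omult (ev l) (F b)))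
      = (if b = y then 2 / h ^ 7 else 0) *\<^sub>R F b" if "b \<in> B" for b
    using Eh_right_fundamental[OF h_pos lattice_diff[OF assms], of b "F b"] that B_lattice by auto
  then have "cauchy_op h B F y = h ^ 7 *\<^sub>R (\<Sum>b\<in>B. (if b = y then 2 / h ^ 7 else 0) *\<^sub>R F b
      - omult (Eh h (y - b)) (dirac h F b))"
    by (simp add: cauchy_op_by_parts sum_subtractf dirac_def omult.sum_right)
  also have "\<dots> = (if y \<in> B then 2 else 0) *\<^sub>R F y - h ^ 7 *\<^sub>R (\<Sum>b\<in>B. omult (Eh h (y - b)) (dirac h F b))"
    using h_pos B_finite by (simp add: sum_subtractf scaleR_diff_right if_distrib[of "\<lambda>c. c *\<^sub>R _"] sum.delta'
        cong: if_cong)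
  finally show ?thesis .
qed

lemma cauchy_op_const: "y \<in> lattice h \<Longrightarrow> cauchy_op h B (\<lambda>_. c) y = (if y \<in> B then 2 else 0) *\<^sub>R c"
  by (simp add: cauchy_pompeiu dirac_const omult.zero_right)

lemma Sop_eq: "y \<in> lattice h \<Longrightarrow> Sop h B g y = cauchy_op h B g y + (1 - 2 * chi B y) *\<^sub>R g y"
  by (simp add: Sop_eq_cauchy_op[OF h_pos] cauchy_op_const chi_def algebra_simps)

lemma dirac_cauchy_kernel:
  assumes "x \<in> lattice h" "b \<in> lattice h"
  shows "dirac h (\<lambda>y. cauchy_kernel h B x y v) b
       = 2 *\<^sub>R (\<Sum>l<8. ((if x = b + h *\<^sub>R ev l then jump_minus h B l x else 0)
                     + (if x = b - h *\<^sub>R ev l then jump_plus h B l x else 0)) *\<^sub>R omult (ev l) v)"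
proof -
  have p: "x - h *\<^sub>R ev l \<in> lattice h" "x + h *\<^sub>R ev l \<in> lattice h" for l
    using assms(1) lattice_add lattice_diff scaled_ev_in_lattice by blast+
  have eq: "(b = x - h *\<^sub>R ev l) = (x = b + h *\<^sub>R ev l)" "(b = x + h *\<^sub>R ev l) = (x = b - h *\<^sub>R ev l)" for l
    by (auto simp: algebra_simps)
  have cf: "h ^ 7 * c * (if P then 2 / h ^ 7 else 0) = 2 * (if P then c else 0)" for c P
    using h_pos by simp
  show ?thesis
    unfolding cauchy_kernel_def
    by (simp add: cf dirac_scaleR dirac_sum dirac_add dirac_Eh_translate[OF h_pos assms(2) p(1)]
        dirac_Eh_translate[OF h_pos assms(2) p(2)] eq scaleR_sum_right scaleR_add_right scaleR_add_left)
qed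

lemma dirac_cauchy_op:
  assumes "b \<in> lattice h"
  shows "dirac h (cauchy_op h B G) b
       = 2 *\<^sub>R (\<Sum>l<8. jump_minus h B l (b + h *\<^sub>R ev l) *\<^sub>R omult (ev l) (G (b + h *\<^sub>R ev l))
                     + jump_plus h B l (b - h *\<^sub>R ev l) *\<^sub>R omult (ev l) (G (b - h *\<^sub>R ev l)))"
proof -
  have "dirac h (cauchy_op h B G) b = 2 *\<^sub>R (\<Sum>l<8.
        (\<Sum>x\<in>dbound h B. (if x = b + h *\<^sub>R ev l then jump_minus h B l x else 0) *\<^sub>R omult (ev l) (G x))
      + (\<Sum>x\<in>dbound h B. (if x = b - h *\<^sub>R ev l then jump_plus h B l x else 0) *\<^sub>R omult (ev l) (G x)))"
    unfolding cauchy_op_def dirac_sum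
    using dirac_cauchy_kernel[OF _ assms] dbound_subset_lattice
    by (simp add: subset_iff scaleR_add_left sum.distrib sum.swap[of _ "dbound h B" "{..<8}"]
        flip: scaleR_sum_right)
  also have "\<dots> = 2 *\<^sub>R (\<Sum>l<8. jump_minus h B l (b + h *\<^sub>R ev l) *\<^sub>R omult (ev l) (G (b + h *\<^sub>R ev l))
                     + jump_plus h B l (b - h *\<^sub>R ev l) *\<^sub>R omult (ev l) (G (b - h *\<^sub>R ev l)))"
    using finite_dbound[OF B_finite] jump_minus_nonzero_imp_dbound[OF B_lattice]
      jump_plus_nonzero_imp_dbound[OF B_lattice]
    by (intro arg_cong[where f = "\<lambda>s. 2 *\<^sub>R s"] sum.cong refl) (simp add: sum_delta_scaleR)
  finally show ?thesis .
qed

text \<open>For b in B the jumps of chi B at b + h e_l and b - h e_l are chi B - 1 and 1 - chi B there,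
  so only the part of G outside B survives.\<close>

lemma dirac_cauchy_op_in_B:
  assumes "b \<in> B"
  shows "dirac h (cauchy_op h B G) b = - 2 *\<^sub>R dirac h (\<lambda>x. (1 - chi B x) *\<^sub>R G x) b"
proof -
  have "chi B b = 1" using assms by (simp add: chi_def)
  moreover have "b \<in> lattice h" using assms B_lattice by blast
  ultimately show ?thesis
    unfolding dirac_cauchy_op[OF \<open>b \<in> lattice h\<close>]
    by (simp add: dirac_def jump_minus_def jump_plus_def omult.add_right omult.diff_right omult.scaleR_right
        scaleR_add_right scaleR_sum_right sum_negf[symmetric] algebra_simps)
qed

lemma cauchy_op_cauchy_op:
  assumes "y \<in> lattice h"
  shows "cauchy_op h B (cauchy_op h B G) y
       = (if y \<in> B then 2 else 0) *\<^sub>R cauchy_op h B G y - 2 *\<^sub>R cauchy_op h B (\<lambda>x. (1 - chi B x) *\<^sub>R G x) y"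
proof -
  define H where "H x = (1 - chi B x) *\<^sub>R G x" for x
  define R where "R = h ^ 7 *\<^sub>R (\<Sum>b\<in>B. omult (Eh h (y - b)) (dirac h H b))"
  have "(\<Sum>b\<in>B. omult (Eh h (y - b)) (dirac h (cauchy_op h B G) b))
      = (\<Sum>b\<in>B. - 2 *\<^sub>R omult (Eh h (y - b)) (dirac h H b))"
    by (intro sum.cong refl) (simp add: dirac_cauchy_op_in_B H_def[abs_def] omult.scaleR_right omult.minus_right)
  then have "h ^ 7 *\<^sub>R (\<Sum>b\<in>B. omult (Eh h (y - b)) (dirac h (cauchy_op h B G) b)) = - 2 *\<^sub>R R"
    by (simp add: R_def scaleR_sum_right mult.commute)
  moreover have "cauchy_op h B H y = - R"
    using cauchy_pompeiu[OF assms, of H] by (simp add: R_def H_def chi_def)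
  ultimately show ?thesis
    using cauchy_pompeiu[OF assms, of "cauchy_op h B G"] by (simp add: H_def[abs_def])
qed

lemma cauchy_op_Sop:
  assumes "y \<in> lattice h"
  shows "cauchy_op h B (Sop h B g) y = (2 * chi B y - 1) *\<^sub>R cauchy_op h B g y"
proof -
  have "cauchy_op h B (Sop h B g) y
      = cauchy_op h B (\<lambda>x. cauchy_op h B g x + (g x - 2 *\<^sub>R (chi B x *\<^sub>R g x))) y"
  proof (rule cauchy_op_cong)
    fix x assume "x \<in> dbound h B"
    then have "x \<in> lattice h" using dbound_subset_lattice by blast
    then show "Sop h B g x = cauchy_op h B g x + (g x - 2 *\<^sub>R (chi B x *\<^sub>R g x))"
      by (simp add: Sop_eq algebra_simps)
  qed
  also have "\<dots> = cauchy_op h B (cauchy_op h B g) y + cauchy_op h B g y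
      - 2 *\<^sub>R cauchy_op h B (\<lambda>x. chi B x *\<^sub>R g x) y"
    by (simp only: cauchy_op_add cauchy_op_diff cauchy_op_scaleR add_diff_eq)
  also have "\<dots> = (2 * chi B y - 1) *\<^sub>R cauchy_op h B g y"
    by (cases "y \<in> B")
       (simp_all add: cauchy_op_cauchy_op[OF assms] scaleR_diff_left cauchy_op_diff chi_def vec_eq_iff
        algebra_simps)
  finally show ?thesis .
qed

theorem Sop_Sop:
  assumes y: "y \<in> lattice h"
  shows "Sop h B (Sop h B g) y = g y"
proof -
  have "chi B y = 0 \<or> chi B y = 1" by (simp add: chi_def indicator_def)
  have "Sop h B (Sop h B g) y = cauchy_op h B (Sop h B g) y + (1 - 2 * chi B y) *\<^sub>R Sop h B g y"
    by (rule Sop_eq[OF y])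
  also have "\<dots> = (2 * chi B y - 1) *\<^sub>R cauchy_op h B g y
      + (1 - 2 * chi B y) *\<^sub>R (cauchy_op h B g y + (1 - 2 * chi B y) *\<^sub>R g y)"
    by (simp only: cauchy_op_Sop[OF y] Sop_eq[OF y])
  also have "\<dots> = g y"
    using \<open>chi B y = 0 \<or> chi B y = 1\<close> by (elim disjE) (simp_all add: scaleR_add_right)
  finally show ?thesis .
qed

lemma Sop_linear:
  "Sop h B (\<lambda>x. a *\<^sub>R F x + b *\<^sub>R G x) y = a *\<^sub>R Sop h B F y + b *\<^sub>R Sop h B G y"
  by (simp add: Sop_eq_cauchy_op[OF h_pos] cauchy_op_add cauchy_op_scaleR algebra_simps)

lemma Sop_Pop: "y \<in> lattice h \<Longrightarrow> Sop h B (Pop h B g) y = Pop h B g y"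
proof -
  assume "y \<in> lattice h"
  have "Pop h B g = (\<lambda>x. (1 / 2) *\<^sub>R g x + (1 / 2) *\<^sub>R Sop h B g x)"
    by (simp add: Pop_def fun_eq_iff scaleR_add_right)
  then have "Sop h B (Pop h B g) y = (1 / 2) *\<^sub>R Sop h B g y + (1 / 2) *\<^sub>R Sop h B (Sop h B g) y"
    by (simp only: Sop_linear)
  then show ?thesis by (simp add: Sop_Sop[OF \<open>y \<in> lattice h\<close>] Pop_def algebra_simps)
qed

lemma Sop_Qop: "y \<in> lattice h \<Longrightarrow> Sop h B (Qop h B g) y = - Qop h B g y"
proof -
  assume "y \<in> lattice h"
  have "Qop h B g = (\<lambda>x. (1 / 2) *\<^sub>R g x + (- 1 / 2) *\<^sub>R Sop h B g x)"
    by (simp add: Qop_def fun_eq_iff scaleR_diff_right)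
  then have "Sop h B (Qop h B g) y = (1 / 2) *\<^sub>R Sop h B g y + (- 1 / 2) *\<^sub>R Sop h B (Sop h B g) y"
    by (simp only: Sop_linear)
  then show ?thesis by (simp add: Sop_Sop[OF \<open>y \<in> lattice h\<close>] Qop_def algebra_simps)
qed

end

theorem mainTheorem14:
  fixes h :: real and B :: "(real ^ 8) set"
  assumes "h > 0" and "B \<subseteq> lattice h" and "bounded B"
  shows "\<forall>g :: real ^ 8 \<Rightarrow> octo. \<forall>y\<in>dbound h B.
           Pop h B (Pop h B g) y = Pop h B g y
         \<and> Qop h B (Qop h B g) y = Qop h B g y
         \<and> Pop h B (Qop h B g) y = 0
         \<and> Qop h B (Pop h B g) y = 0"
proof (intro allI ballI)
  fix g :: "real^8 \<Rightarrow> octo" and y assume "y \<in> dbound h B"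
  then have y: "y \<in> lattice h" using dbound_subset_lattice by blast
  interpret lattice_region h B
    using assms bounded_lattice_subset_finite by unfold_locales auto
  have "Pop h B (Pop h B g) y = (1 / 2) *\<^sub>R (Pop h B g y + Sop h B (Pop h B g) y)"
    and "Qop h B (Qop h B g) y = (1 / 2) *\<^sub>R (Qop h B g y - Sop h B (Qop h B g) y)"
    and "Pop h B (Qop h B g) y = (1 / 2) *\<^sub>R (Qop h B g y + Sop h B (Qop h B g) y)"
    and "Qop h B (Pop h B g) y = (1 / 2) *\<^sub>R (Pop h B g y - Sop h B (Pop h B g) y)"
    by (simp_all only: Pop_def Qop_def)
  then show "Pop h B (Pop h B g) y = Pop h B g y \<and> Qop h B (Qop h B g) y = Qop h B g y
           \<and> Pop h B (Qop h B g) y = 0 \<and> Qop h B (Pop h B g) y = 0"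
    by (simp add: Sop_Pop[OF y] Sop_Qop[OF y] scaleR_add_right flip: scaleR_2)
qed

end
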